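(* Let $R$ be a total preorder on $\Omega$ and $B : \Omega \to \mathbb{R}$ a bound. Then $B$ is consistent with $R$ if and only if both of the following hold: $B(\mathbf{x}) \le B(\mathbf{y})$ whenever $\mathbf{x} <_R \mathbf{y}$, and $B(\mathbf{x}) = B(\mathbf{y})$ whenever $\mathbf{x} \sim_R \mathbf{y}$.
   Context: $\Omega$ is a finite set (of samples). A total preorder $R$ on $\Omega$ is a reflexive, transitive relation $\lesssim_R$ such that for all $\mathbf{x},\mathbf{y}$, $\mathbf{x} \lesssim_R \mathbf{y}$ or $\mathbf{y} \lesssim_R \mathbf{x}$; write $\mathbf{x} \sim_R \mathbf{y}$ if both hold and $\mathbf{x} <_R \mathbf{y}$ if $\mathbf{x} \lesssim_R \mathbf{y}$ but not $\mathbf{x} \sim_R \mathbf{y}$. A total order $T$ on $\Omega$ (with $\le_T$, $<_T$) is a total preorder in which $\mathbf{x} \sim_T \mathbf{y}$ implies $\mathbf{x} = \mathbf{y}$. A bound is any function $B : \Omega \to \mathbb{R}$. $B$ is consistent with a total order $T$ if $\mathbf{x} \le_T \mathbf{y}$ implies $B(\mathbf{x}) \le B(\mathbf{y})$. A total order $T$ agrees with a total preorder $R$ if $\mathbf{x} <_R \mathbf{y}$ implies $\mathbf{x} <_T \mathbf{y}$ for all $\mathbf{x},\mathbf{y} \in \Omega$. $B$ is consistent with the preorder $R$ if it is consistent with every total order that agrees with $R$. *)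

theory Defs
  imports Complex_Main
begin

definition total_preorder_on :: "'a set \<Rightarrow> 'a rel \<Rightarrow> bool" where
  "total_preorder_on \<Omega> R \<longleftrightarrow> R \<subseteq> \<Omega> \<times> \<Omega> \<and> refl_on \<Omega> R \<and> trans R \<and>
     (\<forall>x\<in>\<Omega>. \<forall>y\<in>\<Omega>. (x,y) \<in> R \<or> (y,x) \<in> R)"

definition equiv_R :: "'a rel \<Rightarrow> 'a \<Rightarrow> 'a \<Rightarrow> bool" where
  "equiv_R R x y \<longleftrightarrow> (x,y) \<in> R \<and> (y,x) \<in> R"

definition less_R :: "'a rel \<Rightarrow> 'a \<Rightarrow> 'a \<Rightarrow> bool" where
  "less_R R x y \<longleftrightarrow> (x,y) \<in> R \<and> \<not> equiv_R R x y"

definition total_order_on :: "'a set \<Rightarrow> 'a rel \<Rightarrow> bool" where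
  "total_order_on \<Omega> T \<longleftrightarrow> total_preorder_on \<Omega> T \<and>
     (\<forall>x y. equiv_R T x y \<longrightarrow> x = y)"

definition bound_consistent_order :: "'a rel \<Rightarrow> ('a \<Rightarrow> real) \<Rightarrow> bool" where
  "bound_consistent_order T B \<longleftrightarrow> (\<forall>x y. (x,y) \<in> T \<longrightarrow> B x \<le> B y)"

definition agrees :: "'a set \<Rightarrow> 'a rel \<Rightarrow> 'a rel \<Rightarrow> bool" where
  "agrees \<Omega> T R \<longleftrightarrow> (\<forall>x\<in>\<Omega>. \<forall>y\<in>\<Omega>. less_R R x y \<longrightarrow> less_R T x y)"

definition bound_consistent_preorder :: "'a set \<Rightarrow> 'a rel \<Rightarrow> ('a \<Rightarrow> real) \<Rightarrow> bool" where
  "bound_consistent_preorder \<Omega> R B \<longleftrightarrow>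
     (\<forall>T. total_order_on \<Omega> T \<and> agrees \<Omega> T R \<longrightarrow> bound_consistent_order T B)"

end

theory Submission
  imports Defs
begin

text \<open>Breaking the ties of R lexicographically by a linear order of \<Omega>, or by its converse,
  gives two total orders agreeing with R that order any two R-equivalent samples in opposite
  directions; a bound consistent with R is monotone along both, hence constant on R-classes.
  Conversely, a total order agreeing with R never reverses a strict R-comparison, so each of its
  pairs is R-increasing or R-equivalent.\<close>

lemma total_preorder_on_iff: "total_preorder_on \<Omega> R \<longleftrightarrow> preorder_on \<Omega> R \<and> total_on \<Omega> R"
  unfolding total_preorder_on_def preorder_on_def total_on_def refl_on_def by fastforce

lemma total_order_on_iff_linear_order_on: "total_order_on \<Omega> T \<longleftrightarrow> linear_order_on \<Omega> T"
  unfolding total_order_on_def total_preorder_on_iff linear_order_on_def partial_order_on_def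
    antisym_def equiv_R_def preorder_on_def by auto

definition lex_refinement :: "'a rel \<Rightarrow> 'a rel \<Rightarrow> 'a rel" where
  "lex_refinement R L = {(x, y) \<in> R. (y, x) \<notin> R \<or> (x, y) \<in> L}"

lemma linear_order_on_lex_refinement:
  assumes "total_preorder_on \<Omega> R" and "linear_order_on \<Omega> L"
  shows "linear_order_on \<Omega> (lex_refinement R L)"
proof -
  have R: "preorder_on \<Omega> R" "total_on \<Omega> R"
    using assms(1) by (simp_all add: total_preorder_on_iff)
  have L: "preorder_on \<Omega> L" "antisym L" "total_on \<Omega> L"
    using assms(2) by (simp_all add: linear_order_on_def partial_order_on_def)
  have "trans (lex_refinement R L)"
  proof (rule transI)
    fix x y z
    assume xy: "(x, y) \<in> lex_refinement R L" and yz: "(y, z) \<in> lex_refinement R L"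
    then have "(x, y) \<in> R" "(y, z) \<in> R"
      by (simp_all add: lex_refinement_def)
    with R have xz: "(x, z) \<in> R"
      unfolding preorder_on_def by (meson transD)
    show "(x, z) \<in> lex_refinement R L"
    proof (cases "(z, x) \<in> R")
      case True
      with \<open>(x, y) \<in> R\<close> \<open>(y, z) \<in> R\<close> R have "(y, x) \<in> R" "(z, y) \<in> R"
        unfolding preorder_on_def by (meson transD)+
      with xy yz have "(x, y) \<in> L" "(y, z) \<in> L"
        by (simp_all add: lex_refinement_def)
      with L have "(x, z) \<in> L"
        unfolding preorder_on_def by (meson transD)
      with xz show ?thesis by (simp add: lex_refinement_def)
    qed (simp add: xz lex_refinement_def)
  qed
  moreover have "lex_refinement R L \<subseteq> \<Omega> \<times> \<Omega>" "refl_on \<Omega> (lex_refinement R L)"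
    using R L by (auto simp: lex_refinement_def preorder_on_def refl_on_def)
  moreover have "antisym (lex_refinement R L)"
    using L(2) by (auto simp: lex_refinement_def antisym_def)
  moreover have "total_on \<Omega> (lex_refinement R L)"
    using R(2) L(3) by (auto simp: lex_refinement_def total_on_def)
  ultimately show ?thesis
    by (simp add: linear_order_on_def partial_order_on_def preorder_on_def)
qed

lemma agrees_lex_refinement: "agrees \<Omega> (lex_refinement R L) R"
  unfolding agrees_def less_R_def equiv_R_def lex_refinement_def by auto

lemma bound_consistent_order_lex_refinement:
  assumes "bound_consistent_preorder \<Omega> R B" and "total_preorder_on \<Omega> R"
    and "linear_order_on \<Omega> L"
  shows "bound_consistent_order (lex_refinement R L) B"
  using assms(1) linear_order_on_lex_refinement[OF assms(2,3)]
  by (simp add: bound_consistent_preorder_def total_order_on_iff_linear_order_on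
      agrees_lex_refinement)

lemma bound_consistent_preorder_mono:
  assumes "bound_consistent_preorder \<Omega> R B" and "total_preorder_on \<Omega> R"
    and "less_R R x y"
  shows "B x \<le> B y"
proof -
  obtain L where "well_order_on \<Omega> L"
    using well_order_on by blast
  then have "bound_consistent_order (lex_refinement R L) B"
    using assms(1,2) by (simp add: bound_consistent_order_lex_refinement well_order_on_def)
  moreover from assms(3) have "(x, y) \<in> lex_refinement R L"
    by (simp add: less_R_def equiv_R_def lex_refinement_def)
  ultimately show ?thesis
    by (simp add: bound_consistent_order_def)
qed

lemma bound_consistent_preorder_equiv:
  assumes "bound_consistent_preorder \<Omega> R B" and "total_preorder_on \<Omega> R"
    and "equiv_R R x y"
  shows "B x = B y"
proof -
  obtain L where "well_order_on \<Omega> L"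
    using well_order_on by blast
  then have L: "linear_order_on \<Omega> L" "linear_order_on \<Omega> (L\<inverse>)"
    by (simp_all add: well_order_on_def)
  have "x \<in> \<Omega>" "y \<in> \<Omega>"
    using assms(2,3) by (auto simp: total_preorder_on_def equiv_R_def)
  with L(1) have "(x, y) \<in> L \<or> (y, x) \<in> L"
    unfolding linear_order_on_def partial_order_on_def preorder_on_def refl_on_def total_on_def
    by metis
  with assms(3) have "(x, y) \<in> lex_refinement R L \<and> (y, x) \<in> lex_refinement R (L\<inverse>) \<or>
      (y, x) \<in> lex_refinement R L \<and> (x, y) \<in> lex_refinement R (L\<inverse>)"
    by (auto simp: equiv_R_def lex_refinement_def)
  with bound_consistent_order_lex_refinement[OF assms(1,2) L(1)]
    bound_consistent_order_lex_refinement[OF assms(1,2) L(2)]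
  show ?thesis
    unfolding bound_consistent_order_def by force
qed

lemma bound_consistent_preorderI:
  assumes "total_preorder_on \<Omega> R"
    and mono: "\<And>x y. x \<in> \<Omega> \<Longrightarrow> y \<in> \<Omega> \<Longrightarrow> less_R R x y \<Longrightarrow> B x \<le> B y"
    and equiv: "\<And>x y. x \<in> \<Omega> \<Longrightarrow> y \<in> \<Omega> \<Longrightarrow> equiv_R R x y \<Longrightarrow> B x = B y"
  shows "bound_consistent_preorder \<Omega> R B"
  unfolding bound_consistent_preorder_def bound_consistent_order_def
proof (intro allI impI)
  fix T x y
  assume T: "total_order_on \<Omega> T \<and> agrees \<Omega> T R" and "(x, y) \<in> T"
  then have "x \<in> \<Omega>" "y \<in> \<Omega>" "\<not> less_R T y x"
    by (auto simp: total_order_on_def total_preorder_on_def less_R_def equiv_R_def)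
  with T have "\<not> less_R R y x"
    by (auto simp: agrees_def)
  with assms(1) \<open>x \<in> \<Omega>\<close> \<open>y \<in> \<Omega>\<close> have "less_R R x y \<or> equiv_R R x y"
    by (auto simp: total_preorder_on_def less_R_def equiv_R_def)
  with mono equiv \<open>x \<in> \<Omega>\<close> \<open>y \<in> \<Omega>\<close> show "B x \<le> B y"
    by fastforce
qed

theorem lemma3:
  fixes \<Omega> :: "'a set" and R :: "'a rel" and B :: "'a \<Rightarrow> real"
  assumes "finite \<Omega>"
    and "total_preorder_on \<Omega> R"
  shows "bound_consistent_preorder \<Omega> R B \<longleftrightarrow>
    ((\<forall>x\<in>\<Omega>. \<forall>y\<in>\<Omega>. less_R R x y \<longrightarrow> B x \<le> B y) \<and>
     (\<forall>x\<in>\<Omega>. \<forall>y\<in>\<Omega>. equiv_R R x y \<longrightarrow> B x = B y))"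
proof (intro iffI conjI ballI impI)
  fix x y
  assume "bound_consistent_preorder \<Omega> R B"
  with assms(2) show "less_R R x y \<Longrightarrow> B x \<le> B y" and "equiv_R R x y \<Longrightarrow> B x = B y"
    by (simp_all add: bound_consistent_preorder_mono bound_consistent_preorder_equiv)
next
  assume "(\<forall>x\<in>\<Omega>. \<forall>y\<in>\<Omega>. less_R R x y \<longrightarrow> B x \<le> B y) \<and>
    (\<forall>x\<in>\<Omega>. \<forall>y\<in>\<Omega>. equiv_R R x y \<longrightarrow> B x = B y)"
  with assms(2) show "bound_consistent_preorder \<Omega> R B"
    by (simp add: bound_consistent_preorderI)
qed

end
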